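(* For every $l\ge 0$, up to a unit of $\mathbb{Z}[q,q^{-1}]$, $$\mathrm{GCD}(f_{l,0},\dots,f_{l,l})=\prod_{m\ge1}\Phi_m^{t_{l,m}},\qquad t_{l,m}=\begin{cases}\lfloor \tfrac{l+1}{m}\rfloor-1 & 1\le m\le l,\\ 0 & m>l.\end{cases}$$
   Context: In $\mathbb{Z}[q,q^{-1}]$ set $\{i\}_q=q^i-1$, $\{i\}_{q,n}=\{i\}_q\cdots\{i-n+1\}_q$ (equal to $1$ for $n=0$), $\{n\}_q!=\{n\}_{q,n}$, and $f_{l,k}=\{l-k\}_q!\{k\}_q!$ for $0\le k\le l$. GCD is a greatest common divisor in the UFD $\mathbb{Z}[q,q^{-1}]$ (defined up to units $\pm q^j$). $\Phi_m$ is the $m$th cyclotomic polynomial; $\lfloor r\rfloor$ is the floor of $r$. *)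

theory Defs
  imports Complex_Main "HOL-Computational_Algebra.Computational_Algebra"
begin

definition qbr :: "nat \<Rightarrow> int poly" where
  "qbr i = monom 1 i - 1"

definition qfact :: "nat \<Rightarrow> int poly" where
  "qfact n = (\<Prod>i\<in>{1..n}. qbr i)"

definition f :: "nat \<Rightarrow> nat \<Rightarrow> int poly" where
  "f l k = qfact (l - k) * qfact k"

definition cyclotomic :: "nat \<Rightarrow> int poly" where
  "cyclotomic m = (THE p. map_poly of_int p =
      (\<Prod>k\<in>{k. k < m \<and> coprime k m}. [:- cis (2 * pi * real k / real m), 1:]))"

definition t :: "nat \<Rightarrow> nat \<Rightarrow> nat" where
  "t l m = (if 1 \<le> m \<and> m \<le> l then (l + 1) div m - 1 else 0)"

end

theory Submission
  imports Defs
begin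

(*
  The q-numbers factor into cyclotomic polynomials:  q^i - 1 = prod_{d | i} Phi_d.
  Hence {n}_q! = prod_d Phi_d^(n div d) and
      f_{l,k} = prod_{d=1..l} Phi_d^((l-k) div d + k div d).
  Distinct cyclotomic polynomials are coprime (their product divides the squarefree
  polynomial q^N - 1), so the GCD of such products of powers is the product of the
  powers with the minimal exponents, provided each minimum is attained.  For fixed d
  the exponent (l-k) div d + k div d is at least (l+1) div d - 1, with equality
  at k = d - 1; this minimum is exactly t_{l,d}.
*)

section \<open>Integer polynomials inside polynomials over a ring of characteristic zero\<close>

abbreviation int_poly :: "int poly \<Rightarrow> 'a :: comm_ring_1 poly" where
  "int_poly \<equiv> map_poly of_int"

lemma int_poly_add [simp]: "int_poly (p + q) = int_poly p + int_poly q"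
  by (intro poly_eqI) (simp add: coeff_map_poly)

lemma int_poly_diff [simp]: "int_poly (p - q) = int_poly p - int_poly q"
  by (intro poly_eqI) (simp add: coeff_map_poly)

lemma int_poly_mult [simp]: "int_poly (p * q) = int_poly p * int_poly q"
  by (intro poly_eqI) (simp add: coeff_map_poly coeff_mult)

lemma int_poly_prod: "int_poly (prod g A) = (\<Prod>x\<in>A. int_poly (g x))"
  by (induction A rule: infinite_finite_induct) auto

lemma int_poly_monom [simp]: "int_poly (monom c n) = monom (of_int c) n"
  by (simp add: map_poly_monom)

lemma int_poly_eq_iff [simp]:
  "(int_poly p :: 'a :: {comm_ring_1, ring_char_0} poly) = int_poly q \<longleftrightarrow> p = q"
  by (auto simp: poly_eq_iff coeff_map_poly)

lemma degree_int_poly [simp]: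
  "degree (int_poly p :: 'a :: {comm_ring_1, ring_char_0} poly) = degree p"
  by (simp add: degree_map_poly)

lemma lead_coeff_int_poly:
  "lead_coeff (int_poly p :: 'a :: {comm_ring_1, ring_char_0} poly) = of_int (lead_coeff p)"
  by (simp add: coeff_map_poly)

text \<open>This is what makes cyclotomic polynomials integral.\<close>

lemma monic_quotient_int_poly:
  fixes A B :: "int poly" and X :: "'a :: {idom, ring_char_0} poly"
  assumes monic: "lead_coeff B = 1" and quot: "int_poly B * X = int_poly A"
  shows "\<exists>q. X = int_poly q"
proof -
  have "B \<noteq> 0" using monic by auto
  obtain q r where qr: "pseudo_divmod A B = (q, r)" by fastforce
  from pseudo_divmod[OF \<open>B \<noteq> 0\<close> qr] monic
  have A: "A = B * q + r" and r: "r = 0 \<or> degree r < degree B" by auto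
  have rem: "int_poly B * (X - int_poly q) = (int_poly r :: 'a poly)"
    using quot A by (simp add: algebra_simps)
  have "X = int_poly q"
  proof (rule ccontr)
    assume "X \<noteq> int_poly q"
    moreover have "int_poly B \<noteq> (0 :: 'a poly)"
      using \<open>B \<noteq> 0\<close> int_poly_eq_iff[of B 0] by simp
    ultimately have "degree B \<le> degree r" "r \<noteq> 0"
      using degree_mult_eq[of "int_poly B" "X - int_poly q"] rem
      by (auto simp del: int_poly_eq_iff simp: int_poly_eq_iff[of r 0, symmetric])
    with r show False by simp
  qed
  then show ?thesis ..
qed

section \<open>Cyclotomic polynomials over the complex numbers\<close>

definition complex_cyclotomic :: "nat \<Rightarrow> complex poly" where
  "complex_cyclotomic m = (\<Prod>k\<in>{k. k < m \<and> coprime k m}. [:- cis (2 * pi * real k / real m), 1:])"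

lemma lead_coeff_complex_cyclotomic: "lead_coeff (complex_cyclotomic m) = 1"
  unfolding complex_cyclotomic_def by (simp add: lead_coeff_prod)

text \<open>X^n - 1 is the product of X - z over the n-th roots of unity; it is separable
  because its derivative n X^(n-1) only vanishes at 0.\<close>

lemma complex_xn_minus_1_factorization:
  assumes "n > 0"
  shows "(monom 1 n - 1 :: complex poly) = (\<Prod>k<n. [:- cis (2 * pi * real k / real n), 1:])"
proof -
  let ?p = "monom 1 n - 1 :: complex poly"
  have "coeff ?p n = 1" using assms by (simp add: coeff_monom)
  moreover have "degree ?p \<le> n" by (intro degree_diff_le) (auto simp: degree_monom_le)
  ultimately have "degree ?p = n" by (metis antisym le_degree zero_neq_one)
  hence monic: "lead_coeff ?p = 1" using assms by (simp add: coeff_monom)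
  have roots: "{z. poly ?p z = 0} = {z. z ^ n = 1}" by (auto simp: poly_monom)
  have "rsquarefree ?p"
    unfolding rsquarefree_roots
  proof (intro allI notI)
    fix a assume a: "poly ?p a = 0 \<and> poly (pderiv ?p) a = 0"
    have "pderiv ?p = monom (of_nat n) (n - 1)" by (simp add: pderiv_diff pderiv_monom)
    hence "a = 0" using a assms by (simp add: poly_monom)
    thus False using a assms by (simp add: poly_monom power_0_left)
  qed
  hence "?p = smult (lead_coeff ?p) (\<Prod>z | poly ?p z = 0. [:-z, 1:])"
    by (rule complex_poly_decompose_rsquarefree[symmetric])
  also have "\<dots> = (\<Prod>z | poly ?p z = 0. [:-z, 1:])"
    by (simp only: monic smult_1_left)
  also have "\<dots> = (\<Prod>k<n. [:- cis (2 * pi * real k / real n), 1:])"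
    unfolding roots
    by (rule prod.reindex_bij_betw[OF bij_betw_roots_unity[OF assms], of "\<lambda>z. [:-z, 1:]", symmetric])
  finally show ?thesis .
qed

text \<open>Writing each fraction j/n (0 \<le> j < n) in lowest terms k/d gives a bijection between
  the pairs (d, k) with d dividing n, k < d coprime to d, and the residues below n.\<close>

lemma bij_betw_reduced_fractions:
  fixes n :: nat
  assumes n: "n > 0"
  shows "bij_betw (\<lambda>(d, k). k * (n div d))
           (SIGMA d:{d. d dvd n}. {k. k < d \<and> coprime k d}) {..<n}"
    (is "bij_betw ?\<phi> ?S _")
proof (rule bij_betw_byWitness[where f' = "\<lambda>j. (n div gcd j n, j div gcd j n)"])
  show "\<forall>x\<in>?S. (n div gcd (?\<phi> x) n, ?\<phi> x div gcd (?\<phi> x) n) = x"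
  proof
    fix x assume "x \<in> ?S"
    then obtain d k where x: "x = (d, k)" "d dvd n" "coprime k d" by auto
    then obtain m where m: "n = d * m" by blast
    with n have "d > 0" "m > 0" by auto
    have "gcd (k * m) n = m" using x(3) m
      by (metis coprime_iff_gcd_eq_1 gcd_mult_distrib_nat mult.commute mult_1)
    thus "(n div gcd (?\<phi> x) n, ?\<phi> x div gcd (?\<phi> x) n) = x"
      using x m \<open>d > 0\<close> \<open>m > 0\<close> by simp
  qed
  show "\<forall>j\<in>{..<n}. ?\<phi> (n div gcd j n, j div gcd j n) = j"
  proof
    fix j assume "j \<in> {..<n}"
    define g where "g = gcd j n"
    have "g > 0" "g dvd j" using n by (auto simp: g_def)
    obtain c where c: "n = g * c" by (metis g_def gcd_dvd2 dvdE)
    with n have "c > 0" by auto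
    have "n div (n div g) = g" using c \<open>g > 0\<close> \<open>c > 0\<close> by simp
    thus "?\<phi> (n div gcd j n, j div gcd j n) = j"
      using \<open>g dvd j\<close> by (simp add: g_def[symmetric])
  qed
  show "?\<phi> ` ?S \<subseteq> {..<n}"
  proof clarify
    fix d k assume "d dvd n" "k < d"
    then obtain m where m: "n = d * m" by blast
    with n have "m > 0" by auto
    have "k * m < d * m" using \<open>k < d\<close> \<open>m > 0\<close> by simp
    thus "k * (n div d) < n" using m \<open>m > 0\<close> by simp
  qed
  show "(\<lambda>j. (n div gcd j n, j div gcd j n)) ` {..<n} \<subseteq> ?S"
  proof
    fix x assume "x \<in> (\<lambda>j. (n div gcd j n, j div gcd j n)) ` {..<n}"
    then obtain j where j: "x = (n div gcd j n, j div gcd j n)" "j < n" by auto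
    define g where "g = gcd j n"
    have "g > 0" "g dvd n" "g dvd j" using n by (auto simp: g_def)
    have "j div g < n div g" using \<open>j < n\<close> \<open>g dvd n\<close> \<open>g dvd j\<close> \<open>g > 0\<close>
      by (metis div_less_iff_less_mult dvd_div_mult_self)
    moreover have "coprime (j div g) (n div g)" unfolding g_def using div_gcd_coprime n by blast
    moreover have "n div g dvd n" using \<open>g dvd n\<close> by (metis dvd_div_mult_self dvd_triv_left)
    ultimately show "x \<in> ?S" using j by (simp add: g_def[symmetric])
  qed
qed

text \<open>Regrouping the n-th roots of unity by their exact order: X^n - 1 is the product of
  the complex cyclotomic polynomials of the divisors of n.\<close>

lemma prod_complex_cyclotomic_divisors:
  assumes n: "n > 0"
  shows "(\<Prod>d\<in>{d. d dvd n}. complex_cyclotomic d) = monom 1 n - 1"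
proof -
  let ?S = "SIGMA d:{d. d dvd n}. {k. k < d \<and> coprime k d}"
  have "(\<Prod>d\<in>{d. d dvd n}. complex_cyclotomic d)
        = (\<Prod>(d, k)\<in>?S. [:- cis (2 * pi * real k / real d), 1:])"
    unfolding complex_cyclotomic_def using n by (subst prod.Sigma) auto
  also have "\<dots> = (\<Prod>(d, k)\<in>?S. [:- cis (2 * pi * real (k * (n div d)) / real n), 1:])"
  proof (intro prod.cong refl, clarify)
    fix d k assume "d dvd n"
    then obtain m where "n = d * m" "m > 0" using n by auto
    hence "2 * pi * real k / real d = 2 * pi * real (k * (n div d)) / real n" by simp
    thus "[:- cis (2 * pi * real k / real d), 1:] = [:- cis (2 * pi * real (k * (n div d)) / real n), 1:]"
      by (simp only:)
  qed
  also have "\<dots> = (\<Prod>j<n. [:- cis (2 * pi * real j / real n), 1:])"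
    using prod.reindex_bij_betw[OF bij_betw_reduced_fractions[OF n],
        of "\<lambda>j. [:- cis (2 * pi * real j / real n), 1:]"]
    by (simp add: case_prod_unfold)
  also have "\<dots> = monom 1 n - 1" using complex_xn_minus_1_factorization[OF n] by simp
  finally show ?thesis .
qed

section \<open>Integral cyclotomic polynomials\<close>

text \<open>By strong induction: X^n - 1 is the product of the complex cyclotomic polynomial of
  order n and those of the proper divisors of n, which are monic and integral by induction;
  the quotient of an integer polynomial by a monic one is integral.\<close>

lemma complex_cyclotomic_integral:
  assumes "n > 0"
  shows "\<exists>p. int_poly p = complex_cyclotomic n"
  using assms
proof (induction n rule: less_induct)
  case (less n)
  define D where "D = {d. d dvd n} - {n}"
  define P where "P = (\<lambda>d. SOME p. int_poly p = complex_cyclotomic d)"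
  have P: "int_poly (P d) = complex_cyclotomic d" if "d \<in> D" for d
  proof -
    have "d < n" "d > 0" using that less.prems by (auto simp: D_def dest: dvd_imp_le intro: gr0I)
    from less.IH[OF this] show ?thesis unfolding P_def by (rule someI_ex)
  qed
  define B where "B = (\<Prod>d\<in>D. P d)"
  have int_B: "int_poly B = (\<Prod>d\<in>D. complex_cyclotomic d)"
    unfolding B_def int_poly_prod using P by (intro prod.cong) auto
  have "lead_coeff (int_poly B :: complex poly) = 1"
    unfolding int_B by (simp add: lead_coeff_prod lead_coeff_complex_cyclotomic)
  hence "lead_coeff B = 1" by (simp add: coeff_map_poly)
  moreover have "int_poly B * complex_cyclotomic n = int_poly (monom 1 n - 1)"
  proof -
    have "int_poly (monom 1 n - 1) = (\<Prod>d\<in>{d. d dvd n}. complex_cyclotomic d)"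
      using prod_complex_cyclotomic_divisors[OF less.prems] by simp
    also have "\<dots> = complex_cyclotomic n * (\<Prod>d\<in>D. complex_cyclotomic d)"
      unfolding D_def using less.prems by (subst prod.remove[of _ n]) auto
    finally show ?thesis unfolding int_B by (simp add: mult.commute)
  qed
  ultimately obtain q where "complex_cyclotomic n = int_poly q"
    using monic_quotient_int_poly by blast
  thus ?case by auto
qed

lemma int_poly_cyclotomic:
  assumes "n > 0"
  shows "int_poly (cyclotomic n) = complex_cyclotomic n"
proof -
  have "\<exists>!p. int_poly p = complex_cyclotomic n"
    using complex_cyclotomic_integral[OF assms] int_poly_eq_iff by metis
  from theI'[OF this] show ?thesis unfolding cyclotomic_def complex_cyclotomic_def by simp
qed

lemma prod_cyclotomic_divisors:
  assumes "n > 0"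
  shows "(\<Prod>d\<in>{d. d dvd n}. cyclotomic d) = monom 1 n - 1"
proof -
  have "(int_poly (\<Prod>d\<in>{d. d dvd n}. cyclotomic d) :: complex poly)
        = (\<Prod>d\<in>{d. d dvd n}. complex_cyclotomic d)"
    unfolding int_poly_prod using assms
    by (intro prod.cong refl int_poly_cyclotomic) (auto intro: gr0I)
  also have "\<dots> = int_poly (monom 1 n - 1)"
    using prod_complex_cyclotomic_divisors[OF assms] by simp
  finally show ?thesis by (simp only: int_poly_eq_iff)
qed

lemma lead_coeff_cyclotomic:
  assumes "n > 0"
  shows "lead_coeff (cyclotomic n) = 1"
  using int_poly_cyclotomic[OF assms] lead_coeff_complex_cyclotomic[of n]
    lead_coeff_int_poly[of "cyclotomic n", where 'a = complex]
  by simp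

lemma cyclotomic_nonzero: "n > 0 \<Longrightarrow> cyclotomic n \<noteq> 0"
  using lead_coeff_cyclotomic[of n] by auto

section \<open>Distinct cyclotomic polynomials are coprime\<close>

text \<open>X^N - 1 is squarefree in characteristic zero: a square factor x^2 would divide both
  X^N - 1 and its derivative, hence the nonzero constant X (X^N - 1)' - N (X^N - 1) = N;
  so x is a constant dividing the leading coefficient 1.\<close>

lemma squarefree_xn_minus_1:
  assumes N: "N > 0"
  shows "squarefree (monom 1 N - 1 :: 'a :: {idom, ring_char_0} poly)"
proof (rule squarefreeI)
  let ?g = "monom 1 N - 1 :: 'a poly"
  fix x :: "'a poly" assume "x ^ 2 dvd ?g"
  then obtain r where g: "?g = x * (x * r)" by (metis dvdE power2_eq_square mult.assoc)
  have "pderiv ?g = x * pderiv (x * r) + (x * r) * pderiv x" unfolding g by (rule pderiv_mult)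
  hence "x dvd pderiv ?g" by simp
  moreover have "x dvd ?g" unfolding g by simp
  ultimately have "x dvd monom 1 1 * pderiv ?g - smult (of_nat N) ?g"
    by (intro dvd_diff dvd_mult) (auto intro: dvd_smult)
  also have "monom 1 1 * pderiv ?g - smult (of_nat N) ?g = [:of_nat N:]"
    using N by (simp add: pderiv_diff pderiv_monom mult_monom smult_diff_right smult_monom monom_0)
  finally have "x dvd [:of_nat N:]" .
  hence "degree x = 0" using N by (metis dvd_imp_degree_le degree_pCons_0 le_zero_eq of_nat_eq_0_iff
        pCons_eq_0_iff not_gr0)
  then obtain c where c: "x = [:c:]" by (elim degree_eq_zeroE) auto
  have "c dvd coeff ?g N" using \<open>x dvd ?g\<close> c const_poly_dvd_iff by blast
  moreover have "coeff ?g N = 1" using N by (simp add: coeff_monom)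
  ultimately show "x dvd 1" using c by (simp add: is_unit_const_poly_iff)
qed

text \<open>A common divisor of a and b appears squared in a * b.\<close>

lemma squarefree_mult_imp_coprime:
  assumes "squarefree (a * b)"
  shows "coprime a b"
proof (rule coprimeI)
  fix c assume "c dvd a" "c dvd b"
  hence "c ^ 2 dvd a * b" by (simp add: power2_eq_square mult_dvd_mono)
  with assms show "c dvd 1" by (rule squarefreeD)
qed

text \<open>Phi_d1 * Phi_d2 divides the squarefree polynomial X^(d1 d2) - 1.\<close>

lemma coprime_cyclotomic:
  assumes "d1 > 0" "d2 > 0" "d1 \<noteq> d2"
  shows "coprime (cyclotomic d1) (cyclotomic d2)"
proof (rule squarefree_mult_imp_coprime)
  have "d1 * d2 > 0" using assms by simp
  have "prod cyclotomic {d1, d2} dvd prod cyclotomic {d. d dvd d1 * d2}"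
    using \<open>d1 * d2 > 0\<close> by (intro prod_dvd_prod_subset) auto
  hence "cyclotomic d1 * cyclotomic d2 dvd monom 1 (d1 * d2) - 1"
    using assms prod_cyclotomic_divisors[OF \<open>d1 * d2 > 0\<close>] by simp
  thus "squarefree (cyclotomic d1 * cyclotomic d2)"
    using squarefree_xn_minus_1[OF \<open>d1 * d2 > 0\<close>] by (rule squarefree_mono)
qed

section \<open>Cyclotomic factorization of q-numbers, q-factorials and the products f l k\<close>

lemma qbr_factorization:
  assumes "1 \<le> i" "i \<le> L"
  shows "qbr i = (\<Prod>d\<in>{1..L}. cyclotomic d ^ (if d dvd i then 1 else 0))"
proof -
  have "(\<Prod>d\<in>{1..L}. cyclotomic d ^ (if d dvd i then 1 else 0))
      = (\<Prod>d\<in>{1..L}. if d dvd i then cyclotomic d else 1)" by (intro prod.cong) auto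
  also have "\<dots> = prod cyclotomic {d \<in> {1..L}. d dvd i}" by (rule prod.inter_filter[symmetric]) simp
  also have "{d \<in> {1..L}. d dvd i} = {d. d dvd i}" using assms
    by (auto dest: dvd_imp_le intro: gr0I)
  also have "prod cyclotomic \<dots> = qbr i" using prod_cyclotomic_divisors[of i] assms by (simp add: qbr_def)
  finally show ?thesis by simp
qed

text \<open>Each d contributes to {n}_q! once for every multiple of d up to n.\<close>

lemma qfact_factorization:
  "n \<le> L \<Longrightarrow> qfact n = (\<Prod>d\<in>{1..L}. cyclotomic d ^ (n div d))"
proof (induction n)
  case 0
  then show ?case by (simp add: qfact_def)
next
  case (Suc n)
  have "qfact (Suc n) = qfact n * qbr (Suc n)" unfolding qfact_def
    by (simp add: prod.nat_ivl_Suc' mult.commute)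
  also have "\<dots> = (\<Prod>d\<in>{1..L}. cyclotomic d ^ (n div d + (if d dvd Suc n then 1 else 0)))"
    using Suc by (simp add: qbr_factorization prod.distrib power_add)
  also have "\<dots> = (\<Prod>d\<in>{1..L}. cyclotomic d ^ (Suc n div d))"
    by (intro prod.cong refl) (auto simp: div_Suc dvd_eq_mod_eq_0)
  finally show ?case .
qed

lemma f_factorization:
  "k \<le> l \<Longrightarrow> f l k = (\<Prod>d\<in>{1..l}. cyclotomic d ^ ((l - k) div d + k div d))"
  unfolding f_def by (simp add: qfact_factorization[of _ l] prod.distrib[symmetric] power_add)

section \<open>The GCD of products of powers of pairwise coprime elements\<close>

lemma multiplicity_prod_powers:
  fixes q :: "'a :: factorial_semiring"
  assumes "prime q" "finite A" "\<And>i. i \<in> A \<Longrightarrow> c i \<noteq> 0"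
  shows "multiplicity q (\<Prod>i\<in>A. c i ^ e i) = (\<Sum>i\<in>A. e i * multiplicity q (c i))"
proof -
  have "multiplicity q (\<Prod>i\<in>A. c i ^ e i) = (\<Sum>i\<in>A. multiplicity q (c i ^ e i))"
    using assms by (intro prime_elem_multiplicity_prod_distrib) auto
  also have "\<dots> = (\<Sum>i\<in>A. e i * multiplicity q (c i))"
    using assms by (intro sum.cong refl prime_elem_multiplicity_power_distrib) auto
  finally show ?thesis .
qed

text \<open>A prime q divides at most one c_i, so for every prime q
  there is a k for which F k and prod_i c_i^(m i) contain q equally often.\<close>

lemma coprime_powers_multiplicity_witness:
  fixes c :: "'i \<Rightarrow> 'a :: factorial_semiring_gcd"
    and e :: "'k \<Rightarrow> 'i \<Rightarrow> nat" and m :: "'i \<Rightarrow> nat"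
  assumes K: "K \<noteq> {}" and q: "prime q"
    and coprime: "\<And>i j. i \<in> A \<Longrightarrow> j \<in> A \<Longrightarrow> i \<noteq> j \<Longrightarrow> coprime (c i) (c j)"
    and attained: "\<And>i. i \<in> A \<Longrightarrow> \<exists>k\<in>K. e k i = m i"
  shows "\<exists>k\<in>K. \<forall>i\<in>A. e k i * multiplicity q (c i) = m i * multiplicity q (c i)"
proof (cases "\<exists>i0\<in>A. q dvd c i0")
  case True
  then obtain i0 where i0: "i0 \<in> A" "q dvd c i0" by blast
  from attained[OF i0(1)] obtain k where k: "k \<in> K" "e k i0 = m i0" by blast
  have zero: "multiplicity q (c i) = 0" if "i \<in> A" "i \<noteq> i0" for i
  proof -
    have "\<not> q dvd c i"
      using coprime[OF that(1) i0(1) that(2)] i0(2) q coprime_common_divisor not_prime_unit by blast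
    thus ?thesis by (rule not_dvd_imp_multiplicity_0)
  qed
  show ?thesis
  proof (intro bexI[OF _ k(1)] ballI)
    fix i assume "i \<in> A"
    thus "e k i * multiplicity q (c i) = m i * multiplicity q (c i)"
      using k(2) zero by (cases "i = i0") auto
  qed
next
  case False
  hence zero: "multiplicity q (c i) = 0" if "i \<in> A" for i
    using that by (auto intro: not_dvd_imp_multiplicity_0)
  from K obtain k where "k \<in> K" by blast
  thus ?thesis by (intro bexI[of _ k]) (simp_all add: zero)
qed

text \<open>If moreover c_i \<noteq> 0 and m i bounds every exponent e k i from below, the GCD of the
  F k is (the normalization of) prod_i c_i^(m i): the product divides each F k, and by the
  witness above the GCD contains no prime more often than the product does.\<close>

lemma Gcd_prod_coprime_powers:
  fixes c :: "'i \<Rightarrow> 'a :: factorial_semiring_gcd"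
    and e :: "'k \<Rightarrow> 'i \<Rightarrow> nat" and m :: "'i \<Rightarrow> nat"
  assumes fin: "finite A" and K: "K \<noteq> {}"
    and nonzero: "\<And>i. i \<in> A \<Longrightarrow> c i \<noteq> 0"
    and coprime: "\<And>i j. i \<in> A \<Longrightarrow> j \<in> A \<Longrightarrow> i \<noteq> j \<Longrightarrow> coprime (c i) (c j)"
    and lower: "\<And>k i. k \<in> K \<Longrightarrow> i \<in> A \<Longrightarrow> m i \<le> e k i"
    and attained: "\<And>i. i \<in> A \<Longrightarrow> \<exists>k\<in>K. e k i = m i"
  shows "Gcd ((\<lambda>k. \<Prod>i\<in>A. c i ^ e k i) ` K) = normalize (\<Prod>i\<in>A. c i ^ m i)"
proof -
  define F where "F = (\<lambda>k. \<Prod>i\<in>A. c i ^ e k i)"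
  define G where "G = Gcd (F ` K)"
  define P where "P = (\<Prod>i\<in>A. c i ^ m i)"
  have F_nonzero: "F k \<noteq> 0" for k using fin nonzero by (simp add: F_def)
  have G_dvd: "G dvd F k" if "k \<in> K" for k using that by (auto simp: G_def intro: Gcd_dvd)
  have "P dvd G" unfolding G_def
  proof (rule Gcd_greatest, clarify)
    fix k assume "k \<in> K"
    thus "P dvd F k" unfolding P_def F_def using lower by (auto intro!: prod_dvd_prod le_imp_power_dvd)
  qed
  moreover have "G dvd P"
  proof (rule multiplicity_le_imp_dvd)
    from K obtain k where "k \<in> K" by blast
    thus "G \<noteq> 0" using G_dvd F_nonzero by (metis dvd_0_left)
  next
    fix q :: 'a assume q: "prime q"
    from coprime_powers_multiplicity_witness[OF K q coprime attained]
    obtain k where k: "k \<in> K"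
      and agree: "\<forall>i\<in>A. e k i * multiplicity q (c i) = m i * multiplicity q (c i)" ..
    have "multiplicity q G \<le> multiplicity q (F k)"
      using G_dvd[OF k] F_nonzero by (rule dvd_imp_multiplicity_le)
    also have "\<dots> = (\<Sum>i\<in>A. e k i * multiplicity q (c i))"
      unfolding F_def using q fin nonzero by (rule multiplicity_prod_powers)
    also have "\<dots> = (\<Sum>i\<in>A. m i * multiplicity q (c i))" using agree by (intro sum.cong) auto
    also have "\<dots> = multiplicity q P"
      unfolding P_def using q fin nonzero by (rule multiplicity_prod_powers[symmetric])
    finally show "multiplicity q G \<le> multiplicity q P" .
  qed
  ultimately have "G dvd normalize P" "normalize P dvd G" by simp_all
  moreover have "normalize G = G" unfolding G_def by (rule normalize_Gcd)
  ultimately have "G = normalize P" by (rule associated_eqI) simp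
  thus ?thesis unfolding G_def F_def P_def .
qed

section \<open>The floor estimates\<close>

text \<open>Splitting l + 1 = (l - k) + k + 1 shows that the exponent of the d-th cyclotomic
  polynomial in f l k is never below (l + 1) div d - 1 ...\<close>

lemma div_add_lower_bound:
  fixes a b d :: nat
  assumes "d > 0"
  shows "(a + b + 1) div d \<le> a div d + b div d + 1"
proof -
  define r where "r = a mod d + b mod d + 1"
  have "a mod d < d" "b mod d < d" using assms by simp_all
  hence "r < 2 * d" unfolding r_def by linarith
  hence "r div d < 2" using assms by (simp add: div_less_iff_less_mult)
  moreover have "a + b + 1 = r + (a div d + b div d) * d"
    by (simp add: r_def algebra_simps)
  hence "(a + b + 1) div d = r div d + (a div d + b div d)"
    using assms by simp
  ultimately show ?thesis by simp
qed

lemma div_add_bound_attained: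
  fixes d l :: nat
  assumes "1 \<le> d" "d \<le> l + 1"
  shows "(l - (d - 1)) div d + (d - 1) div d = (l + 1) div d - 1"
proof -
  define x where "x = l - (d - 1)"
  have "l + 1 = x + d" using assms by (simp add: x_def)
  moreover have "(x + d) div d = x div d + 1" using assms by simp
  ultimately have "(l + 1) div d = x div d + 1" by simp
  moreover have "(d - 1) div d = 0" using assms by simp
  ultimately show ?thesis by (simp add: x_def)
qed

text \<open>The factorizations of the f l k satisfy the hypotheses of the GCD formula with the
  minimal exponents t l d; the resulting product is monic, hence already normalized.\<close>

theorem corollary4p2:
  fixes l :: nat
  shows "Gcd (f l ` {0..l}) = (\<Prod>m\<in>{1..l}. cyclotomic m ^ t l m)"
proof -
  have t: "t l d = (l + 1) div d - 1" if "d \<in> {1..l}" for d using that by (simp add: t_def)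
  have "f l ` {0..l} = (\<lambda>k. \<Prod>d\<in>{1..l}. cyclotomic d ^ ((l - k) div d + k div d)) ` {0..l}"
    by (intro image_cong refl) (simp add: f_factorization)
  also have "Gcd \<dots> = normalize (\<Prod>d\<in>{1..l}. cyclotomic d ^ t l d)"
  proof (rule Gcd_prod_coprime_powers)
    fix k d assume "k \<in> {0..l}" "d \<in> {1..l}"
    thus "t l d \<le> (l - k) div d + k div d"
      using div_add_lower_bound[of d "l - k" k] t by auto
  next
    fix d assume d: "d \<in> {1..l}"
    show "\<exists>k\<in>{0..l}. (l - k) div d + k div d = t l d"
      using d div_add_bound_attained[of d l] t[OF d] by (intro bexI[of _ "d - 1"]) auto
  qed (auto simp: cyclotomic_nonzero coprime_cyclotomic)
  also have "\<dots> = (\<Prod>d\<in>{1..l}. cyclotomic d ^ t l d)"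
    by (simp add: normalize_poly_eq_map_poly lead_coeff_prod lead_coeff_power lead_coeff_cyclotomic)
  finally show ?thesis .
qed

end
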